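(* Let $0<c<1/2$. Then $$\sum_{i\in\mathrm{OPT}} w(i)\sum_{B\in\mathcal F(i)} c^{\,1+\mathrm{brank}(i,B)}\le\frac{2c}{1-c}\,w(\mathrm{OPT}).$$
   Context: Let $U$ be a finite ground set with weight function $w:U\to\mathbb{R}_{\ge0}$ taking pairwise distinct values; for $X\subseteq U$, $w(X)=\sum_{x\in X}w(x)$. Let $\mathcal F$ be a laminar family of subsets of $U$ (for any $A,B\in\mathcal F$: $A\subseteq B$, $B\subseteq A$, or $A\cap B=\emptyset$) with $U\in\mathcal F$; each $A\in\mathcal F$ has a positive integer capacity $\mu(A)$, with $\mu(A)<\mu(B)$ whenever $A\subsetneq B$. A set $X\subseteq U$ is independent iff $|X\cap A|\le\mu(A)$ for all $A\in\mathcal F$. For $i\in U$, $\mathcal F(i)$ is the set of all members of $\mathcal F$ containing $i$. For $B\in\mathcal F$, $\mathrm{OPT}(B)$ is the maximum-weight independent subset of $B$, and $\mathrm{OPT}=\mathrm{OPT}(U)$. The backward rank $\mathrm{brank}(i,B)$ is the number of elements of $\mathrm{OPT}(B)$ of weight less than $w(i)$. Standing convention of the paper: by padding $U$ with dummy elements of infinitesimal weight, one assumes $|\mathrm{OPT}(B)|=\mu(B)$ for every $B\in\mathcal F$. *)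

theory Defs
  imports Complex_Main
begin

definition laminar :: "'a set set \<Rightarrow> bool" where
  "laminar F \<longleftrightarrow> (\<forall>A\<in>F. \<forall>B\<in>F. A \<subseteq> B \<or> B \<subseteq> A \<or> A \<inter> B = {})"

definition wt :: "('a \<Rightarrow> real) \<Rightarrow> 'a set \<Rightarrow> real" where
  "wt w X = (\<Sum>x\<in>X. w x)"

definition lam_indep :: "'a set set \<Rightarrow> ('a set \<Rightarrow> nat) \<Rightarrow> 'a set \<Rightarrow> bool" where
  "lam_indep F \<mu> X \<longleftrightarrow> (\<forall>A\<in>F. card (X \<inter> A) \<le> \<mu> A)"

definition is_max_indep ::
  "'a set set \<Rightarrow> ('a set \<Rightarrow> nat) \<Rightarrow> ('a \<Rightarrow> real) \<Rightarrow> 'a set \<Rightarrow> 'a set \<Rightarrow> bool" where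
  "is_max_indep F \<mu> w B X \<longleftrightarrow> X \<subseteq> B \<and> lam_indep F \<mu> X \<and>
     (\<forall>Y. Y \<subseteq> B \<and> lam_indep F \<mu> Y \<longrightarrow> wt w Y \<le> wt w X)"

definition members_containing :: "'a set set \<Rightarrow> 'a \<Rightarrow> 'a set set" where
  "members_containing F i = {A\<in>F. i \<in> A}"

definition brank :: "('a \<Rightarrow> real) \<Rightarrow> ('a set \<Rightarrow> 'a set) \<Rightarrow> 'a \<Rightarrow> 'a set \<Rightarrow> nat" where
  "brank w OPT i B = card {x\<in>OPT B. w x < w i}"

end

theory Submission
  imports Defs
begin

text \<open>
  Fix a threshold \<theta> and let T be the elements of OPT U of weight at least \<theta>. By the exchange
  property of the laminar matroid, for i \<in> T \<inter> B there are at most as many elements of OPT B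
  at least as heavy as i as there are in T \<inter> B, so brank(i, B) is at least \<mu>(B) - |T \<inter> B| plus
  the rank of i in T \<inter> B. Summing the geometric series, B contributes at most c/(1-c) times the
  deficit c^(\<mu>(B)-t) (1 - c^t), where t = |T \<inter> B|.
  The potential \<Phi>(\<nu>, t) = (1 + c + ... + c^(t-1)) (1 + c^(\<nu>-t)) is subadditive in t and at
  most 2t, and the deficit equals \<Phi>(\<mu>(B), t) - \<Phi>(\<mu>(B)+1, t). As capacities strictly
  increase along the laminar tree, an induction over the tree bounds the sum of these terms by
  2|T|. So every upper set T of OPT U receives at most 2c/(1-c) \<cdot> |T|, and Abel summation over
  the thresholds yields the weighted inequality.
\<close>

section \<open>A potential on the laminar tree\<close>

definition deficit :: "real \<Rightarrow> nat \<Rightarrow> nat \<Rightarrow> real" where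
  "deficit c \<nu> t = c ^ (\<nu> - t) * (1 - c ^ t)"

definition potential :: "real \<Rightarrow> nat \<Rightarrow> nat \<Rightarrow> real" where
  "potential c \<nu> t = (1 - c ^ t) / (1 - c) * (1 + c ^ (\<nu> - t))"

context
  fixes c :: real
  assumes c: "0 < c" "c < 1"
begin

lemma potential_0 [simp]: "potential c \<nu> 0 = 0"
  by (simp add: potential_def)

lemma potential_nonneg: "0 \<le> potential c \<nu> t"
  unfolding potential_def using c by (simp add: add_nonneg_pos power_le_one)

lemma potential_add_le:
  assumes "a + b \<le> \<nu>"
  shows "potential c \<nu> (a + b) \<le> potential c \<nu> a + potential c \<nu> b"
proof -
  obtain d where \<nu>: "\<nu> = a + b + d"
    using assms le_Suc_ex by blast
  define p q r where "p = c ^ a" and "q = c ^ b" and "r = c ^ d"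
  have pqr: "0 \<le> p" "p \<le> 1" "0 \<le> q" "q \<le> 1" "0 \<le> r" "r \<le> 1"
    unfolding p_def q_def r_def using c by (auto simp: power_le_one)
  have "(1 - p * q) * (1 + r) \<le> (1 - p) * (1 + q * r) + (1 - q) * (1 + p * r)"
    using mult_nonneg_nonneg[OF mult_nonneg_nonneg, of "1 - p" "1 - q" "1 - r"] pqr
    by (simp add: algebra_simps)
  then have "(1 - p * q) / (1 - c) * (1 + r)
      \<le> (1 - p) / (1 - c) * (1 + q * r) + (1 - q) / (1 - c) * (1 + p * r)"
    using c by (simp add: divide_simps)
  then show ?thesis
    unfolding potential_def p_def q_def r_def \<nu> by (simp add: power_add algebra_simps)
qed

lemma potential_le_double: "potential c \<nu> t \<le> 2 * real t"
proof -
  have "(1 - c ^ t) / (1 - c) = (\<Sum>k<t. c ^ k)"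
    using c by (simp add: sum_gp_strict)
  also have "\<dots> \<le> (\<Sum>k<t. 1)"
    by (intro sum_mono) (use c in \<open>simp add: power_le_one\<close>)
  finally have "(1 - c ^ t) / (1 - c) \<le> t"
    by simp
  moreover have "0 \<le> (1 - c ^ t) / (1 - c)"
    using c by (simp add: power_le_one)
  ultimately have "potential c \<nu> t \<le> real t * 2"
    unfolding potential_def using c by (intro mult_mono) (auto simp: power_le_one)
  then show ?thesis
    by simp
qed

lemma potential_antimono:
  assumes "t \<le> \<nu>" "\<nu> \<le> \<nu>'"
  shows "potential c \<nu>' t \<le> potential c \<nu> t"
proof -
  have "c ^ (\<nu>' - t) \<le> c ^ (\<nu> - t)"
    using c assms by (intro power_decreasing) auto
  then show ?thesis
    unfolding potential_def using c by (intro mult_left_mono) (auto simp: power_le_one)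
qed

lemma potential_diff_Suc:
  assumes "t \<le> \<nu>"
  shows "potential c \<nu> t - potential c (Suc \<nu>) t = deficit c \<nu> t"
proof -
  have "c ^ (Suc \<nu> - t) = c * c ^ (\<nu> - t)"
    using assms by (simp add: Suc_diff_le)
  then have "potential c \<nu> t - potential c (Suc \<nu>) t
      = (1 - c ^ t) / (1 - c) * ((1 + c ^ (\<nu> - t)) - (1 + c * c ^ (\<nu> - t)))"
    unfolding potential_def by (simp only: right_diff_distrib)
  also have "\<dots> = (1 - c ^ t) / (1 - c) * ((1 - c) * c ^ (\<nu> - t))"
    by (simp add: algebra_simps)
  finally show ?thesis
    unfolding deficit_def using c by simp
qed

lemma potential_sum_le:
  assumes "finite S" "sum f S \<le> \<nu>"
  shows "potential c \<nu> (sum f S) \<le> (\<Sum>x\<in>S. potential c \<nu> (f x))"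
  using assms
proof (induction S rule: finite_induct)
  case (insert x S)
  then have "potential c \<nu> (sum f (insert x S)) \<le> potential c \<nu> (f x) + potential c \<nu> (sum f S)"
    using potential_add_le[of "f x" "sum f S" \<nu>] by simp
  with insert show ?case
    by simp
qed simp

lemma potential_le_sum_parts:
  assumes "finite S" "sum f S \<le> t" "t \<le> \<nu>"
  shows "potential c \<nu> t \<le> 2 * (real t - real (sum f S)) + (\<Sum>x\<in>S. potential c \<nu> (f x))"
proof -
  obtain e where t: "t = sum f S + e"
    using assms(2) le_Suc_ex by blast
  then have "potential c \<nu> t \<le> potential c \<nu> (sum f S) + potential c \<nu> e"
    using potential_add_le assms(3) by simp
  also have "\<dots> \<le> (\<Sum>x\<in>S. potential c \<nu> (f x)) + 2 * e"
    using potential_sum_le[OF assms(1), of f \<nu>] potential_le_double[of \<nu> e] t assms(3) by simp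
  finally show ?thesis
    using t by simp
qed

lemma sum_power_eq_deficit:
  "(\<Sum>k<t. c ^ (Suc (\<nu> - t) + k)) = c / (1 - c) * deficit c \<nu> t"
proof -
  have "(\<Sum>k<t. c ^ (Suc (\<nu> - t) + k)) = c ^ Suc (\<nu> - t) * (\<Sum>k<t. c ^ k)"
    by (simp add: power_add sum_distrib_left mult.assoc)
  then show ?thesis
    using c by (simp add: sum_gp_strict deficit_def)
qed

end

section \<open>Rearranging finite sums\<close>

lemma sum_weighted_le_of_upper_sums:
  fixes w a b :: "'a \<Rightarrow> real"
  assumes "finite S" "\<forall>x\<in>S. 0 \<le> w x"
    and "\<And>\<theta>. 0 < \<theta> \<Longrightarrow> (\<Sum>i\<in>{i\<in>S. \<theta> \<le> w i}. a i) \<le> (\<Sum>i\<in>{i\<in>S. \<theta> \<le> w i}. b i)"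
  shows "(\<Sum>i\<in>S. w i * a i) \<le> (\<Sum>i\<in>S. w i * b i)"
  using assms
proof (induction "card S" arbitrary: S w rule: less_induct)
  case less
  show ?case
  proof (cases "S = {}")
    case False
    have "Min (w ` S) \<in> w ` S"
      using less.prems(1) False by simp
    then obtain m where "m \<in> S" "w m = Min (w ` S)"
      by auto
    then have m: "m \<in> S" "\<forall>x\<in>S. w m \<le> w x"
      using less.prems(1) by auto
    define S' where "S' = {i\<in>S. w m < w i}"
    define w' where "w' i = w i - w m" for i
    have "card S' < card S"
      unfolding S'_def using m less.prems(1) by (intro psubset_card_mono) auto
    moreover have "finite S'" "\<forall>x\<in>S'. 0 \<le> w' x"
      unfolding S'_def w'_def using less.prems(1) by auto
    moreover have "(\<Sum>i\<in>{i\<in>S'. \<theta> \<le> w' i}. a i) \<le> (\<Sum>i\<in>{i\<in>S'. \<theta> \<le> w' i}. b i)"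
      if "0 < \<theta>" for \<theta>
    proof -
      have "{i\<in>S'. \<theta> \<le> w' i} = {i\<in>S. \<theta> + w m \<le> w i}"
        unfolding S'_def w'_def using that by auto
      then show ?thesis
        using less.prems(3)[of "\<theta> + w m"] less.prems(2) m that by auto
    qed
    ultimately have IH: "(\<Sum>i\<in>S'. w' i * a i) \<le> (\<Sum>i\<in>S'. w' i * b i)"
      by (rule less.hyps)
    have split: "(\<Sum>i\<in>S. w i * f i) = w m * (\<Sum>i\<in>S. f i) + (\<Sum>i\<in>S'. w' i * f i)" for f
    proof -
      have "(\<Sum>i\<in>S. w' i * f i) = (\<Sum>i\<in>S'. w' i * f i)"
        using m less.prems(1) unfolding S'_def w'_def by (intro sum.mono_neutral_right) force+
      then show ?thesis
        unfolding w'_def by (simp add: algebra_simps sum.distrib sum_distrib_left sum_subtractf)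
    qed
    have "w m * (\<Sum>i\<in>S. a i) \<le> w m * (\<Sum>i\<in>S. b i)"
    proof (cases "w m = 0")
      case False
      then have "{i\<in>S. w m \<le> w i} = S" "0 < w m"
        using m less.prems(2) by force+
      then show ?thesis
        using less.prems(3)[of "w m"] by (simp add: mult_left_mono)
    qed simp
    then show ?thesis
      using IH split[of a] split[of b] by linarith
  qed simp
qed

lemma sum_rank_eq_sum_lessThan:
  fixes w :: "'a \<Rightarrow> 'b::linorder"
  assumes "finite S" "inj_on w S"
  shows "(\<Sum>i\<in>S. f (card {x\<in>S. w x < w i})) = (\<Sum>k<card S. f k)"
proof -
  define r where "r i = card {x\<in>S. w x < w i}" for i
  have r_less: "r i < r j" if "i \<in> S" "j \<in> S" "w i < w j" for i j
    unfolding r_def using that assms(1) by (intro psubset_card_mono) auto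
  have "inj_on r S"
  proof (rule inj_onI)
    fix i j assume "i \<in> S" "j \<in> S" "r i = r j"
    then show "i = j"
      using r_less[of i j] r_less[of j i] assms(2) by (metis inj_onD linorder_cases less_irrefl)
  qed
  moreover have "r ` S = {..<card S}"
  proof (rule card_subset_eq)
    show "r ` S \<subseteq> {..<card S}"
      unfolding r_def using assms(1) by (auto intro!: psubset_card_mono)
    show "card (r ` S) = card {..<card S}"
      using card_image[OF \<open>inj_on r S\<close>] by simp
  qed simp
  ultimately show ?thesis
    unfolding r_def[symmetric] by (metis sum.reindex_cong)
qed

lemma sum_members_containing_swap:
  assumes "finite F" "finite T"
  shows "(\<Sum>i\<in>T. \<Sum>B\<in>members_containing F i. g i B) = (\<Sum>B\<in>F. \<Sum>i\<in>T \<inter> B. g i B)"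
proof -
  have "(\<Sum>i\<in>T. \<Sum>B\<in>members_containing F i. g i B) = (\<Sum>i\<in>T. \<Sum>B\<in>F. if i \<in> B then g i B else 0)"
    unfolding members_containing_def using assms(1) by (simp add: sum.inter_filter)
  also have "\<dots> = (\<Sum>B\<in>F. \<Sum>i\<in>T. if i \<in> B then g i B else 0)"
    by (rule sum.swap)
  also have "\<dots> = (\<Sum>B\<in>F. \<Sum>i\<in>T \<inter> B. g i B)"
    using assms(2) by (simp add: sum.inter_filter Int_def)
  finally show ?thesis .
qed

lemma card_eq_card_less_plus_card_ge:
  fixes f :: "'a \<Rightarrow> 'b::linorder"
  assumes "finite A"
  shows "card A = card {x\<in>A. f x < a} + card {x\<in>A. a \<le> f x}"
proof -
  have "A = {x\<in>A. f x < a} \<union> {x\<in>A. a \<le> f x}"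
    by auto
  then show ?thesis
    using assms by (metis (no_types, lifting) card_Un_disjoint disjoint_iff finite_Un mem_Collect_eq not_le)
qed

section \<open>Laminar matroids\<close>

definition maximal_members :: "'a set set \<Rightarrow> 'a set set" where
  "maximal_members G = {A\<in>G. \<forall>B\<in>G. A \<subseteq> B \<longrightarrow> B = A}"

lemma maximal_members_disjoint:
  assumes "laminar F" "G \<subseteq> F" "A \<in> maximal_members G" "B \<in> maximal_members G" "A \<noteq> B"
  shows "A \<inter> B = {}"
proof -
  have "A \<in> F" "B \<in> F"
    using assms(2-4) unfolding maximal_members_def by auto
  then consider "A \<subseteq> B" | "B \<subseteq> A" | "A \<inter> B = {}"
    using assms(1) unfolding laminar_def by blast
  then show ?thesis
    using assms(3-5) unfolding maximal_members_def by cases auto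
qed

lemma exists_maximal_member_superset:
  assumes "finite G" "A \<in> G"
  shows "\<exists>M\<in>maximal_members G. A \<subseteq> M"
proof -
  obtain M where "M \<in> G" "A \<subseteq> M" "\<forall>B\<in>G. M \<subseteq> B \<longrightarrow> M = B"
    using finite_has_maximal2[OF assms] by blast
  then show ?thesis
    unfolding maximal_members_def by auto
qed

locale laminar_matroid =
  fixes U :: "'a set" and F :: "'a set set" and \<mu> :: "'a set \<Rightarrow> nat"
  assumes finite_ground: "finite U"
    and members_subset: "\<forall>A\<in>F. A \<subseteq> U"
    and laminar: "laminar F"
begin

abbreviation indep :: "'a set \<Rightarrow> bool" where
  "indep X \<equiv> lam_indep F \<mu> X"

lemma finite_family: "finite F"
proof -
  have "F \<subseteq> Pow U"
    using members_subset by auto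
  then show ?thesis
    using finite_ground finite_subset by blast
qed

lemma finite_member: "A \<in> F \<Longrightarrow> finite A"
  using members_subset finite_ground finite_subset by blast

lemma indep_subset:
  assumes "indep J" "I \<subseteq> J"
  shows "indep I"
  unfolding lam_indep_def
proof
  fix A assume "A \<in> F"
  then have "card (I \<inter> A) \<le> card (J \<inter> A)"
    using assms(2) finite_member by (intro card_mono) auto
  then show "card (I \<inter> A) \<le> \<mu> A"
    using assms(1) \<open>A \<in> F\<close> unfolding lam_indep_def by fastforce
qed

lemma tight_member_if_not_indep_insert:
  assumes "indep I" "\<not> indep (insert x I)"
  shows "\<exists>A\<in>F. x \<in> A \<and> card (I \<inter> A) = \<mu> A"
proof -
  obtain A where A: "A \<in> F" "\<mu> A < card (insert x I \<inter> A)"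
    using assms(2) unfolding lam_indep_def by (auto simp: not_le)
  have le: "card (I \<inter> A) \<le> \<mu> A"
    using assms(1) A(1) unfolding lam_indep_def by auto
  then have "insert x I \<inter> A \<noteq> I \<inter> A"
    using A(2) by auto
  then have "x \<in> A" "x \<notin> I"
    by auto
  then have "card (insert x I \<inter> A) = Suc (card (I \<inter> A))"
    using finite_member[OF A(1)] by (simp add: Int_insert_left)
  then show ?thesis
    using A le \<open>x \<in> A\<close> by auto
qed

lemma indep_augment:
  assumes "I \<subseteq> U" "J \<subseteq> U" "indep I" "indep J" "card I < card J"
  shows "\<exists>x\<in>J - I. indep (insert x I)"
proof (rule ccontr)
  assume no_augment: "\<not> (\<exists>x\<in>J - I. indep (insert x I))"
  define G where "G = {A\<in>F. card (I \<inter> A) = \<mu> A \<and> A \<inter> (J - I) \<noteq> {}}"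
  define M where "M = maximal_members G"
  have "finite G"
    unfolding G_def using finite_family by simp
  have "M \<subseteq> G" "G \<subseteq> F"
    unfolding M_def G_def maximal_members_def by auto
  then have "finite M"
    using \<open>finite G\<close> finite_subset by blast
  have cover: "J - I \<subseteq> \<Union>M"
  proof
    fix x assume x: "x \<in> J - I"
    then obtain A where "A \<in> F" "x \<in> A" "card (I \<inter> A) = \<mu> A"
      using tight_member_if_not_indep_insert[OF assms(3)] no_augment by blast
    with x have "A \<in> G"
      unfolding G_def by blast
    then obtain A' where "A' \<in> M" "A \<subseteq> A'"
      using exists_maximal_member_superset[OF \<open>finite G\<close>] unfolding M_def by blast
    then show "x \<in> \<Union>M"
      using \<open>x \<in> A\<close> by blast
  qed
  have card_Int_Union: "card (X \<inter> \<Union>M) = (\<Sum>A\<in>M. card (X \<inter> A))" for X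
  proof -
    have "(X \<inter> A) \<inter> (X \<inter> B) = {}" if "A \<in> M" "B \<in> M" "A \<noteq> B" for A B
      using maximal_members_disjoint[OF laminar \<open>G \<subseteq> F\<close>] that unfolding M_def by blast
    moreover have "finite A" if "A \<in> M" for A
      using that \<open>M \<subseteq> G\<close> \<open>G \<subseteq> F\<close> finite_member by blast
    ultimately have "card (\<Union>A\<in>M. X \<inter> A) = (\<Sum>A\<in>M. card (X \<inter> A))"
      using \<open>finite M\<close> by (intro card_UN_disjoint) auto
    moreover have "X \<inter> \<Union>M = (\<Union>A\<in>M. X \<inter> A)"
      by blast
    ultimately show ?thesis
      by (simp only:)
  qed
  have "card (J \<inter> A) \<le> card (I \<inter> A)" if "A \<in> M" for A
    using that \<open>M \<subseteq> G\<close> assms(4) unfolding G_def lam_indep_def by auto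
  then have "card (J \<inter> \<Union>M) \<le> card (I \<inter> \<Union>M)"
    unfolding card_Int_Union by (rule sum_mono)
  moreover have "finite I" "finite J"
    using assms(1,2) finite_ground finite_subset by auto
  moreover have "card (J - \<Union>M) \<le> card (I - \<Union>M)"
    using cover \<open>finite I\<close> by (intro card_mono) auto
  ultimately show False
    using assms(5) card_Int_Diff[of I "\<Union>M"] card_Int_Diff[of J "\<Union>M"] by linarith
qed

lemma indep_extend:
  assumes "I \<subseteq> U" "J \<subseteq> U" "indep I" "indep J" "card I \<le> card J"
  shows "\<exists>Z. indep Z \<and> I \<subseteq> Z \<and> Z \<subseteq> I \<union> J \<and> card Z = card J"
  using assms
proof (induction "card J - card I" arbitrary: I)
  case 0
  then show ?case
    by auto
next
  case (Suc n)
  then have "card I < card J"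
    by simp
  then obtain x where x: "x \<in> J - I" "indep (insert x I)"
    using indep_augment Suc.prems(1-4) by blast
  have "finite I"
    using Suc.prems(1) finite_ground finite_subset by blast
  then have "n = card J - card (insert x I)" "card (insert x I) \<le> card J"
    using x Suc.hyps(2) \<open>card I < card J\<close> by auto
  moreover have "insert x I \<subseteq> U"
    using x Suc.prems(1,2) by auto
  ultimately obtain Z where "indep Z" "insert x I \<subseteq> Z" "Z \<subseteq> insert x I \<union> J" "card Z = card J"
    using Suc.hyps(1)[of "insert x I"] x(2) Suc.prems(2,4) by blast
  then show ?case
    using x by blast
qed

lemma card_le_if_maximal_indep:
  assumes "S \<subseteq> U" "I \<subseteq> S" "indep I" "\<forall>y\<in>S - I. \<not> indep (insert y I)" "J \<subseteq> S" "indep J"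
  shows "card J \<le> card I"
proof (rule ccontr)
  assume "\<not> card J \<le> card I"
  then obtain x where "x \<in> J - I" "indep (insert x I)"
    using indep_augment[of I J] assms(1-3,5,6) by (meson not_le order_trans)
  then show False
    using assms(4,5) by blast
qed

lemma not_indep_insert_upper_part:
  fixes w :: "'a \<Rightarrow> real"
  assumes "B \<in> F" "is_max_indep F \<mu> w B X" "card X = \<mu> B" "y \<in> B - X" "\<theta> \<le> w y"
  shows "\<not> indep (insert y {x\<in>X. \<theta> \<le> w x})"
proof
  define P where "P = insert y {x\<in>X. \<theta> \<le> w x}"
  assume "indep (insert y {x\<in>X. \<theta> \<le> w x})"
  then have "indep P"
    unfolding P_def .
  have X: "X \<subseteq> B" "indep X" "\<And>Y. Y \<subseteq> B \<Longrightarrow> indep Y \<Longrightarrow> wt w Y \<le> wt w X"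
    using assms(2) unfolding is_max_indep_def by auto
  have "finite X"
    using X(1) finite_member[OF assms(1)] finite_subset by blast
  have "P \<subseteq> B" "B \<subseteq> U"
    unfolding P_def using X(1) assms(1,4) members_subset by auto
  have card_P: "card P = Suc (card {x\<in>X. \<theta> \<le> w x})"
    unfolding P_def using assms(4) \<open>finite X\<close> by simp
  show False
  proof (cases "card P \<le> card X")
    case True
    \<comment> \<open>Completing P from X to size |X| exchanges a light element z of X for y.\<close>
    then obtain Z where Z: "indep Z" "P \<subseteq> Z" "Z \<subseteq> P \<union> X" "card Z = card X"
      using indep_extend[of P X] \<open>indep P\<close> X(1,2) \<open>P \<subseteq> B\<close> \<open>B \<subseteq> U\<close> by blast
    have "y \<in> Z" "Z - {y} \<subseteq> X"
      using Z(2,3) unfolding P_def by auto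
    moreover have "finite Z"
      using Z(3) \<open>finite X\<close> unfolding P_def by (simp add: finite_subset)
    moreover have "0 < card Z"
      using \<open>finite Z\<close> \<open>y \<in> Z\<close> card_gt_0_iff by blast
    ultimately have "card (X - (Z - {y})) = 1"
      using Z(4) card_Diff_subset[of "Z - {y}" X] \<open>finite X\<close> by (simp add: card_Diff_singleton)
    then obtain z where z: "X - (Z - {y}) = {z}"
      using card_1_singletonE by blast
    have "z \<in> X" "z \<notin> Z"
      using z assms(4) by auto
    then have "w z < \<theta>"
      using Z(2) unfolding P_def by force
    moreover have "Z = insert y (X - {z})"
      using z \<open>y \<in> Z\<close> \<open>Z - {y} \<subseteq> X\<close> by blast
    ultimately have "wt w X < wt w Z"
      using \<open>z \<in> X\<close> assms(4,5) \<open>finite X\<close> unfolding wt_def by (simp add: sum_diff1)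
    moreover have "wt w Z \<le> wt w X"
      using X(3) Z(1,3) \<open>P \<subseteq> B\<close> X(1) by (meson Un_least order_trans)
    ultimately show False
      by linarith
  next
    case False
    then have "{x\<in>X. \<theta> \<le> w x} = X"
      using card_P \<open>finite X\<close> by (intro card_seteq) auto
    then have "card (P \<inter> B) = Suc (\<mu> B)"
      using \<open>P \<subseteq> B\<close> card_P assms(3) by (simp add: Int_absorb2)
    then show False
      using \<open>indep P\<close> assms(1) unfolding lam_indep_def by fastforce
  qed
qed

definition below :: "'a set \<Rightarrow> 'a set \<Rightarrow> 'a set set" where
  "below T B = {B'\<in>F. T \<inter> B' \<noteq> {} \<and> B' \<subseteq> B}"

definition children :: "'a set \<Rightarrow> 'a set \<Rightarrow> 'a set set" where
  "children T B = maximal_members {C\<in>F. T \<inter> C \<noteq> {} \<and> C \<subset> B}"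

lemma children_memberD:
  assumes "C \<in> children T B"
  shows "C \<in> F" "T \<inter> C \<noteq> {}" "C \<subset> B"
  using assms unfolding children_def maximal_members_def by auto

lemma finite_children: "finite (children T B)"
  using finite_subset[OF _ finite_family] children_memberD(1) by blast

lemma children_disjoint:
  "C1 \<in> children T B \<Longrightarrow> C2 \<in> children T B \<Longrightarrow> C1 \<noteq> C2 \<Longrightarrow> C1 \<inter> C2 = {}"
  unfolding children_def by (rule maximal_members_disjoint[OF laminar]) auto

lemma below_eq_insert_children:
  assumes "B \<in> F" "T \<inter> B \<noteq> {}"
  shows "below T B = insert B (\<Union>C\<in>children T B. below T C)"
proof (intro equalityI subsetI)
  fix B' assume B': "B' \<in> below T B"
  show "B' \<in> insert B (\<Union>C\<in>children T B. below T C)"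
  proof (cases "B' = B")
    case False
    then have "B' \<in> {C\<in>F. T \<inter> C \<noteq> {} \<and> C \<subset> B}"
      using B' unfolding below_def by auto
    moreover have "finite {C\<in>F. T \<inter> C \<noteq> {} \<and> C \<subset> B}"
      using finite_family by simp
    ultimately obtain C where "C \<in> children T B" "B' \<subseteq> C"
      using exists_maximal_member_superset unfolding children_def by blast
    then show ?thesis
      using B' unfolding below_def by auto
  qed simp
qed (use assms children_memberD(1,2) in \<open>auto simp: below_def dest!: children_memberD(3)\<close>)

lemma sum_below_eq:
  assumes "B \<in> F" "T \<inter> B \<noteq> {}"
  shows "(\<Sum>B'\<in>below T B. f B') = f B + (\<Sum>C\<in>children T B. \<Sum>B'\<in>below T C. f B')"
proof -
  have "B \<notin> (\<Union>C\<in>children T B. below T C)"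
    using children_memberD(3) unfolding below_def by blast
  moreover have "below T C1 \<inter> below T C2 = {}"
    if "C1 \<in> children T B" "C2 \<in> children T B" "C1 \<noteq> C2" for C1 C2
    using children_disjoint[OF that] unfolding below_def by blast
  moreover have "finite (below T X)" for X
    unfolding below_def using finite_family by simp
  ultimately show ?thesis
    unfolding below_eq_insert_children[OF assms] using finite_children
    by (simp add: sum.UNION_disjoint)
qed

lemma sum_card_children_le:
  assumes "B \<in> F"
  shows "(\<Sum>C\<in>children T B. card (T \<inter> C)) \<le> card (T \<inter> B)"
proof -
  have "card (\<Union>C\<in>children T B. T \<inter> C) = (\<Sum>C\<in>children T B. card (T \<inter> C))"
    using finite_children
  proof (rule card_UN_disjoint)
    show "\<forall>C\<in>children T B. finite (T \<inter> C)"
      using children_memberD(1) finite_member by blast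
    show "\<forall>C1\<in>children T B. \<forall>C2\<in>children T B. C1 \<noteq> C2 \<longrightarrow> T \<inter> C1 \<inter> (T \<inter> C2) = {}"
      using children_disjoint by blast
  qed
  moreover have "card (\<Union>C\<in>children T B. T \<inter> C) \<le> card (T \<inter> B)"
    using children_memberD(3) finite_member[OF assms] by (intro card_mono) auto
  ultimately show ?thesis
    by simp
qed

lemma sum_deficit_below_le:
  fixes c :: real and T :: "'a set"
  assumes c: "0 < c" "c < 1"
    and T_le: "\<forall>B\<in>F. card (T \<inter> B) \<le> \<mu> B"
    and \<mu>_mono: "\<forall>A\<in>F. \<forall>B\<in>F. A \<subset> B \<longrightarrow> \<mu> A < \<mu> B"
  shows "B \<in> F \<Longrightarrow> T \<inter> B \<noteq> {} \<Longrightarrow>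
    (\<Sum>B'\<in>below T B. deficit c (\<mu> B') (card (T \<inter> B')))
      \<le> 2 * real (card (T \<inter> B)) - potential c (Suc (\<mu> B)) (card (T \<inter> B))"
proof (induction "card B" arbitrary: B rule: less_induct)
  case less
  define t where "t X = card (T \<inter> X)" for X
  have t_le: "t X \<le> \<mu> X" if "X \<in> F" for X
    using T_le that unfolding t_def by blast
  have IH: "(\<Sum>B'\<in>below T C. deficit c (\<mu> B') (t B')) \<le> 2 * real (t C) - potential c (\<mu> B) (t C)"
    if C: "C \<in> children T B" for C
  proof -
    have "card C < card B"
      using children_memberD(3)[OF C] finite_member[OF less.prems(1)] by (simp add: psubset_card_mono)
    then have "(\<Sum>B'\<in>below T C. deficit c (\<mu> B') (t B'))
        \<le> 2 * real (t C) - potential c (Suc (\<mu> C)) (t C)"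
      using less.hyps children_memberD[OF C] unfolding t_def by blast
    moreover have "\<mu> C < \<mu> B"
      using \<mu>_mono children_memberD[OF C] less.prems(1) by blast
    then have "potential c (\<mu> B) (t C) \<le> potential c (Suc (\<mu> C)) (t C)"
      using potential_antimono[OF c, of "t C" "Suc (\<mu> C)" "\<mu> B"] t_le[OF children_memberD(1)[OF C]]
      by simp
    ultimately show ?thesis
      by linarith
  qed
  have "potential c (\<mu> B) (t B)
      \<le> 2 * (real (t B) - real (\<Sum>C\<in>children T B. t C)) + (\<Sum>C\<in>children T B. potential c (\<mu> B) (t C))"
    using potential_le_sum_parts[OF c finite_children] sum_card_children_le[OF less.prems(1)]
      t_le[OF less.prems(1)] unfolding t_def by blast
  moreover have "deficit c (\<mu> B) (t B) = potential c (\<mu> B) (t B) - potential c (Suc (\<mu> B)) (t B)"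
    using potential_diff_Suc[OF c t_le[OF less.prems(1)]] by simp
  moreover have "(\<Sum>C\<in>children T B. \<Sum>B'\<in>below T C. deficit c (\<mu> B') (t B'))
      \<le> 2 * real (\<Sum>C\<in>children T B. t C) - (\<Sum>C\<in>children T B. potential c (\<mu> B) (t C))"
    using sum_mono[OF IH] by (simp add: sum_subtractf sum_distrib_left)
  ultimately show ?case
    using sum_below_eq[OF less.prems, of "\<lambda>B'. deficit c (\<mu> B') (t B')"] unfolding t_def
    by (smt (verit))
qed

end

section \<open>Optimal solutions on the members of the family\<close>

locale laminar_optimum = laminar_matroid U F \<mu>
  for U :: "'a set" and F :: "'a set set" and \<mu> :: "'a set \<Rightarrow> nat" +
  fixes w :: "'a \<Rightarrow> real" and OPT :: "'a set \<Rightarrow> 'a set"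
  assumes ground_member: "U \<in> F"
    and w_inj: "inj_on w U"
    and OPT_max: "\<forall>B\<in>F. is_max_indep F \<mu> w B (OPT B)"
    and OPT_card: "\<forall>B\<in>F. card (OPT B) = \<mu> B"
begin

lemma OPT_subset: "B \<in> F \<Longrightarrow> OPT B \<subseteq> B"
  and indep_OPT: "B \<in> F \<Longrightarrow> indep (OPT B)"
  using OPT_max unfolding is_max_indep_def by auto

lemma not_indep_insert_OPT_upper_part:
  assumes B: "B \<in> F" and i: "i \<in> OPT U" "i \<in> B" and y: "y \<in> B - OPT U" "w i \<le> w y"
  shows "\<not> indep (insert y {x\<in>OPT U \<inter> B. w i \<le> w x})"
proof
  define I where "I = {x\<in>OPT U \<inter> B. w i \<le> w x}"
  define Y where "Y = {x\<in>OPT U. w y \<le> w x}"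
  assume "indep (insert y {x\<in>OPT U \<inter> B. w i \<le> w x})"
  then have indep_yI: "indep (insert y I)"
    unfolding I_def .
  have "B \<subseteq> U"
    using B members_subset by blast
  have "y \<in> U - OPT U"
    using y(1) \<open>B \<subseteq> U\<close> by blast
  then have "\<not> indep (insert y Y)"
    unfolding Y_def using not_indep_insert_upper_part[OF ground_member, of w "OPT U" y "w y"]
      OPT_max OPT_card ground_member by blast
  moreover have "indep Y"
    by (rule indep_subset[OF indep_OPT[OF ground_member]]) (auto simp: Y_def)
  ultimately obtain A where A: "A \<in> F" "y \<in> A" "card (Y \<inter> A) = \<mu> A"
    using tight_member_if_not_indep_insert by blast
  have "finite A"
    using finite_member[OF A(1)] .
  consider "A \<subseteq> B" | "B \<subseteq> A" | "A \<inter> B = {}"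
    using laminar A(1) B unfolding laminar_def by blast
  then show False
  proof cases
    case 1
    then have "Y \<inter> A \<subseteq> I \<inter> A"
      using y(2) unfolding Y_def I_def by auto
    then have "\<mu> A \<le> card (I \<inter> A)"
      using A(3) \<open>finite A\<close> card_mono[of "I \<inter> A" "Y \<inter> A"] by simp
    moreover have "insert y I \<inter> A = insert y (I \<inter> A)" "y \<notin> I"
      using A(2) y(1) unfolding I_def by auto
    ultimately have "\<mu> A < card (insert y I \<inter> A)"
      using \<open>finite A\<close> by simp
    then show False
      using indep_yI A(1) unfolding lam_indep_def by fastforce
  next
    case 2
    have "i \<noteq> y"
      using i y by auto
    moreover have "i \<in> U" "y \<in> U"
      using i(1) y(1) OPT_subset[OF ground_member] \<open>B \<subseteq> U\<close> by auto
    ultimately have "w i \<noteq> w y"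
      using w_inj by (auto dest: inj_onD)
    then have "w i < w y"
      using y(2) by simp
    then have "i \<notin> Y"
      unfolding Y_def by auto
    then have "card (insert i (Y \<inter> A)) = Suc (\<mu> A)"
      using A(3) \<open>finite A\<close> by simp
    moreover have "insert i (Y \<inter> A) \<subseteq> OPT U \<inter> A"
      using 2 i unfolding Y_def by auto
    ultimately have "Suc (\<mu> A) \<le> card (OPT U \<inter> A)"
      using \<open>finite A\<close> card_mono[of "OPT U \<inter> A" "insert i (Y \<inter> A)"] by simp
    then show False
      using indep_OPT[OF ground_member] A(1) unfolding lam_indep_def by fastforce
  next
    case 3
    then show False
      using A(2) y(1) by blast
  qed
qed

lemma card_upper_OPT_le:
  assumes "B \<in> F" "i \<in> OPT U" "i \<in> B"
  shows "card {x\<in>OPT B. w i \<le> w x} \<le> card {x\<in>OPT U \<inter> B. w i \<le> w x}"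
proof (rule card_le_if_maximal_indep)
  show "{x\<in>B. w i \<le> w x} \<subseteq> U"
    using assms(1) members_subset by blast
  show "indep {x\<in>OPT U \<inter> B. w i \<le> w x}"
    by (rule indep_subset[OF indep_OPT[OF ground_member]]) auto
  show "indep {x\<in>OPT B. w i \<le> w x}"
    by (rule indep_subset[OF indep_OPT[OF assms(1)]]) auto
  show "\<forall>y\<in>{x\<in>B. w i \<le> w x} - {x\<in>OPT U \<inter> B. w i \<le> w x}.
      \<not> indep (insert y {x\<in>OPT U \<inter> B. w i \<le> w x})"
    using not_indep_insert_OPT_upper_part[OF assms] by auto
qed (use OPT_subset assms(1) in auto)

lemma card_OPT_Int_le: "B \<in> F \<Longrightarrow> card (OPT U \<inter> B) \<le> \<mu> B"
  using indep_OPT[OF ground_member] unfolding lam_indep_def by blast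

lemma brank_lower_bound:
  assumes B: "B \<in> F" and T: "T = {x\<in>OPT U. \<theta> \<le> w x}" and i: "i \<in> T \<inter> B"
  shows "\<mu> B - card (T \<inter> B) + card {x\<in>T \<inter> B. w x < w i} \<le> brank w OPT i B"
proof -
  have "finite B"
    using finite_member[OF B] .
  have "card {x\<in>OPT B. w i \<le> w x} \<le> card {x\<in>OPT U \<inter> B. w i \<le> w x}"
    using card_upper_OPT_le[OF B] i unfolding T by blast
  also have "{x\<in>OPT U \<inter> B. w i \<le> w x} = {x\<in>T \<inter> B. w i \<le> w x}"
    using i unfolding T by auto
  finally have "card {x\<in>OPT B. w i \<le> w x} \<le> card {x\<in>T \<inter> B. w i \<le> w x}" .
  moreover have "\<mu> B = brank w OPT i B + card {x\<in>OPT B. w i \<le> w x}"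
    unfolding brank_def using card_eq_card_less_plus_card_ge[of "OPT B" w "w i"]
      OPT_card OPT_subset[OF B] B \<open>finite B\<close> finite_subset by fastforce
  moreover have "card (T \<inter> B) = card {x\<in>T \<inter> B. w x < w i} + card {x\<in>T \<inter> B. w i \<le> w x}"
    using card_eq_card_less_plus_card_ge \<open>finite B\<close> by blast
  moreover have "card (T \<inter> B) \<le> \<mu> B"
    using card_OPT_Int_le[OF B] card_mono[of "OPT U \<inter> B" "T \<inter> B"] \<open>finite B\<close> unfolding T
    by fastforce
  ultimately show ?thesis
    by linarith
qed

lemma sum_power_brank_le_deficit:
  assumes c: "0 < c" "c < 1" and B: "B \<in> F" and T: "T = {x\<in>OPT U. \<theta> \<le> w x}"
  shows "(\<Sum>i\<in>T \<inter> B. c ^ (1 + brank w OPT i B)) \<le> c / (1 - c) * deficit c (\<mu> B) (card (T \<inter> B))"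
proof -
  define t where "t = card (T \<inter> B)"
  have "finite (T \<inter> B)"
    using finite_member[OF B] by simp
  have "inj_on w (T \<inter> B)"
    by (rule inj_on_subset[OF w_inj]) (use OPT_subset[OF ground_member] in \<open>auto simp: T\<close>)
  have "(\<Sum>i\<in>T \<inter> B. c ^ (1 + brank w OPT i B))
      \<le> (\<Sum>i\<in>T \<inter> B. c ^ (Suc (\<mu> B - t) + card {x\<in>T \<inter> B. w x < w i}))"
    using brank_lower_bound[OF B T] c unfolding t_def
    by (intro sum_mono power_decreasing) auto
  also have "\<dots> = (\<Sum>k<t. c ^ (Suc (\<mu> B - t) + k))"
    unfolding t_def by (rule sum_rank_eq_sum_lessThan[OF \<open>finite (T \<inter> B)\<close> \<open>inj_on w (T \<inter> B)\<close>])
  also have "\<dots> = c / (1 - c) * deficit c (\<mu> B) t"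
    by (rule sum_power_eq_deficit[OF c])
  finally show ?thesis
    unfolding t_def .
qed

lemma sum_deficit_le:
  assumes c: "0 < c" "c < 1" and \<mu>_mono: "\<forall>A\<in>F. \<forall>B\<in>F. A \<subset> B \<longrightarrow> \<mu> A < \<mu> B"
    and T: "T \<subseteq> OPT U"
  shows "(\<Sum>B\<in>F. deficit c (\<mu> B) (card (T \<inter> B))) \<le> 2 * real (card T)"
proof -
  have T_le: "\<forall>B\<in>F. card (T \<inter> B) \<le> \<mu> B"
    using card_OPT_Int_le card_mono[of "OPT U \<inter> _" "T \<inter> _"] T finite_member
    by (meson Int_mono finite_Int order_trans subset_refl)
  have "T \<subseteq> U"
    using T OPT_subset[OF ground_member] by blast
  have "(\<Sum>B\<in>F. deficit c (\<mu> B) (card (T \<inter> B)))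
      = (\<Sum>B\<in>below T U. deficit c (\<mu> B) (card (T \<inter> B)))"
    using finite_family members_subset unfolding below_def
    by (intro sum.mono_neutral_right) (auto simp: deficit_def)
  also have "\<dots> \<le> 2 * real (card T)"
  proof (cases "T = {}")
    case False
    then have "T \<inter> U = T"
      using \<open>T \<subseteq> U\<close> by blast
    then show ?thesis
      using sum_deficit_below_le[OF c T_le \<mu>_mono ground_member] False potential_nonneg[OF c]
      by (smt (verit))
  qed (simp add: below_def)
  finally show ?thesis .
qed

lemma sum_upper_part_le:
  assumes c: "0 < c" "c < 1" and \<mu>_mono: "\<forall>A\<in>F. \<forall>B\<in>F. A \<subset> B \<longrightarrow> \<mu> A < \<mu> B"
  shows "(\<Sum>i\<in>{i\<in>OPT U. \<theta> \<le> w i}. \<Sum>B\<in>members_containing F i. c ^ (1 + brank w OPT i B))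
    \<le> 2 * c / (1 - c) * card {i\<in>OPT U. \<theta> \<le> w i}"
proof -
  define T where "T = {i\<in>OPT U. \<theta> \<le> w i}"
  have "finite T"
    unfolding T_def using OPT_subset[OF ground_member] finite_ground finite_subset by (simp add: rev_finite_subset)
  then have "(\<Sum>i\<in>T. \<Sum>B\<in>members_containing F i. c ^ (1 + brank w OPT i B))
      = (\<Sum>B\<in>F. \<Sum>i\<in>T \<inter> B. c ^ (1 + brank w OPT i B))"
    by (rule sum_members_containing_swap[OF finite_family])
  also have "\<dots> \<le> (\<Sum>B\<in>F. c / (1 - c) * deficit c (\<mu> B) (card (T \<inter> B)))"
    using sum_power_brank_le_deficit[OF c _ T_def] by (intro sum_mono)
  also have "\<dots> = c / (1 - c) * (\<Sum>B\<in>F. deficit c (\<mu> B) (card (T \<inter> B)))"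
    by (simp add: sum_distrib_left)
  also have "\<dots> \<le> c / (1 - c) * (2 * card T)"
    using sum_deficit_le[OF c \<mu>_mono, of T] c unfolding T_def by (intro mult_left_mono) auto
  also have "\<dots> = 2 * c / (1 - c) * card T"
    by simp
  finally show ?thesis
    unfolding T_def .
qed

end

theorem lemma4:
  fixes U :: "'a set" and w :: "'a \<Rightarrow> real" and F :: "'a set set"
    and \<mu> :: "'a set \<Rightarrow> nat" and OPT :: "'a set \<Rightarrow> 'a set" and c :: real
  assumes finU: "finite U"
    and w_nonneg: "\<forall>x\<in>U. w x \<ge> 0"
    and w_distinct: "inj_on w U"
    and F_sub: "\<forall>A\<in>F. A \<subseteq> U"
    and F_lam: "laminar F"
    and U_in: "U \<in> F"
    and mu_pos: "\<forall>A\<in>F. \<mu> A > 0"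
    and mu_mono: "\<forall>A\<in>F. \<forall>B\<in>F. A \<subset> B \<longrightarrow> \<mu> A < \<mu> B"
    and OPT_max: "\<forall>B\<in>F. is_max_indep F \<mu> w B (OPT B)"
    and OPT_card: "\<forall>B\<in>F. card (OPT B) = \<mu> B"
    and c_pos: "0 < c" and c_lt: "c < 1/2"
  shows "(\<Sum>i\<in>OPT U. w i * (\<Sum>B\<in>members_containing F i. c ^ (1 + brank w OPT i B)))
           \<le> 2 * c / (1 - c) * wt w (OPT U)"
proof -
  interpret laminar_optimum U F \<mu> w OPT
    using finU F_sub F_lam U_in w_distinct OPT_max OPT_card by unfold_locales
  have c: "0 < c" "c < 1"
    using c_pos c_lt by auto
  define K where "K = 2 * c / (1 - c)"
  have "finite (OPT U)"
    using OPT_subset[OF U_in] finU by (simp add: rev_finite_subset)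
  moreover have "\<forall>x\<in>OPT U. 0 \<le> w x"
    using OPT_subset[OF U_in] w_nonneg by blast
  moreover have "(\<Sum>i\<in>{i\<in>OPT U. \<theta> \<le> w i}. \<Sum>B\<in>members_containing F i. c ^ (1 + brank w OPT i B))
      \<le> (\<Sum>i\<in>{i\<in>OPT U. \<theta> \<le> w i}. K)" for \<theta>
    using sum_upper_part_le[OF c mu_mono, of \<theta>] unfolding K_def by (simp add: mult_ac)
  ultimately have "(\<Sum>i\<in>OPT U. w i * (\<Sum>B\<in>members_containing F i. c ^ (1 + brank w OPT i B)))
      \<le> (\<Sum>i\<in>OPT U. w i * K)"
    by (rule sum_weighted_le_of_upper_sums)
  also have "\<dots> = K * wt w (OPT U)"
    unfolding wt_def by (simp add: sum_distrib_left mult.commute)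
  finally show ?thesis
    unfolding K_def .
qed

end
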